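(* Let $\mathcal S$ be a trajectory set satisfying $\bar\sigma(0)\ge0$. If $\bar I(f)=\bar\sigma(f)$ for every $f\in(\mathcal L^1_{(L)})^+$, then the hedging price integral $\int_{(L)}:\mathcal L^1_{(L)}\to\mathbb R$ is strictly positive, i.e. for every $f\in(\mathcal L^1_{(L)})^+$ with $\int_{(L)}f=0$, $f$ is a null function.
   Context: Fix $s_0\in\mathbb R$. A trajectory set is any set $\mathcal S$ of real sequences $S=(S_j)_{j\in\mathbb N_0}$ with $S_0=s_0$. A simple portfolio $(V,n,H)$ consists of $V\in\mathbb R$, $n\in\mathbb N$ and nonanticipating functions $H_i:\mathcal S\to\mathbb R$, $0\le i\le n-1$ (i.e. $H_i(S)=h_i(S_0,\dots,S_i)$ for some arbitrary $h_i:\mathbb R^{i+1}\to\mathbb R$). Its wealth is $\Pi^{V,n,H}_j(S)=V+\sum_{i=0}^{\min\{j,n\}-1}H_i(S)(S_{i+1}-S_i)$ and $\Pi^{V,n,H}_\infty:=\Pi^{V,n,H}_n$; it is positive if $V\ge0$ and $\Pi^{V,n,H}_\infty\ge0$ on $\mathcal S$. A generalized portfolio is a sequence $(V_m,n_m,H_m)_{m\in\mathbb N_0}$ of simple portfolios, positive for every $m\ge1$; it is a positive generalized portfolio if moreover $\Pi^{V_0,n_0,H_0}_j\equiv0$ for all $j$. A map $f:\mathcal S\to[-\infty,+\infty]$ is superhedged with initial endowment $V=\sum_{m=0}^\infty V_m\in(-\infty,+\infty]$ by such a portfolio if $f\le\sum_{m=0}^\infty\Pi^{V_m,n_m,H_m}_\infty$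 on $\mathcal S$. For $f\ge0$, $\bar I(f)$ is the infimum of initial endowments of positive generalized portfolios superhedging $f$; $\bar\sigma(f)$ is the infimum of initial endowments of generalized portfolios superhedging $f$. Let $\mathcal E=\{\Pi^{V,n,H}_\infty\}$ over all simple portfolios. Under $\bar\sigma(0)\ge0$, $I(\Pi^{V,n,H}_\infty):=V$ is a well-defined linear functional on $\mathcal E$. Define $\|f\|:=\bar I(|f|)$; $f$ is a null function if $\|f\|=0$. Let $\mathcal F$ be the space of real-valued $f$ with $\|f\|<\infty$ and $\mathcal E'=\{f\in\mathcal E:\|f\|<\infty\}$. Under $\bar\sigma(0)\ge0$, $I|_{\mathcal E'}$ is $\|\cdot\|$-continuous; $\mathcal L^1_{(L)}$ is the $\|\cdot\|$-closure of $\mathcal E'$ in $\mathcal F$ and $\int_{(L)}$ the unique $\|\cdot\|$-continuous linear extension of $I|_{\mathcal E'}$ to $\mathcal L^1_{(L)}$; it satisfies $\int_{(L)}f=\bar\sigma(f)$ for $f\in\mathcal L^1_{(L)}$. $(\mathcal L^1_{(L)})^+$ denotes the nonnegative elements of $\mathcal L^1_{(L)}$. *)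

theory Defs
  imports "HOL-Analysis.Analysis"
begin

definition trajectory_set :: "real \<Rightarrow> (nat \<Rightarrow> real) set \<Rightarrow> bool" where
  "trajectory_set s0 TS \<longleftrightarrow> (\<forall>S\<in>TS. S 0 = s0)"

text \<open>Nonanticipating strategies: H i is applied to the prefix (S 0, ..., S i),
  so H i S = h i (S 0, ..., S i) with arbitrary h i.\<close>

definition prefix :: "(nat \<Rightarrow> real) \<Rightarrow> nat \<Rightarrow> real list" where
  "prefix S i = map S [0..<Suc i]"

definition wealth ::
  "real \<Rightarrow> nat \<Rightarrow> (nat \<Rightarrow> real list \<Rightarrow> real) \<Rightarrow> nat \<Rightarrow> (nat \<Rightarrow> real) \<Rightarrow> real" where
  "wealth V n H j S = V + (\<Sum>i<min j n. H i (prefix S i) * (S (Suc i) - S i))"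

definition wealth_inf ::
  "real \<Rightarrow> nat \<Rightarrow> (nat \<Rightarrow> real list \<Rightarrow> real) \<Rightarrow> (nat \<Rightarrow> real) \<Rightarrow> real" where
  "wealth_inf V n H S = wealth V n H n S"

definition positive_portfolio ::
  "(nat \<Rightarrow> real) set \<Rightarrow> real \<Rightarrow> nat \<Rightarrow> (nat \<Rightarrow> real list \<Rightarrow> real) \<Rightarrow> bool" where
  "positive_portfolio TS V n H \<longleftrightarrow> 1 \<le> n \<and> 0 \<le> V \<and> (\<forall>S\<in>TS. 0 \<le> wealth_inf V n H S)"

definition gen_portfolio ::
  "(nat \<Rightarrow> real) set \<Rightarrow> (nat \<Rightarrow> real) \<Rightarrow> (nat \<Rightarrow> nat) \<Rightarrow> (nat \<Rightarrow> nat \<Rightarrow> real list \<Rightarrow> real) \<Rightarrow> bool" where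
  "gen_portfolio TS Vs ns Hs \<longleftrightarrow>
     1 \<le> ns 0 \<and> (\<forall>m\<ge>1. positive_portfolio TS (Vs m) (ns m) (Hs m))"

definition pos_gen_portfolio ::
  "(nat \<Rightarrow> real) set \<Rightarrow> (nat \<Rightarrow> real) \<Rightarrow> (nat \<Rightarrow> nat) \<Rightarrow> (nat \<Rightarrow> nat \<Rightarrow> real list \<Rightarrow> real) \<Rightarrow> bool" where
  "pos_gen_portfolio TS Vs ns Hs \<longleftrightarrow>
     gen_portfolio TS Vs ns Hs \<and> (\<forall>j. \<forall>S\<in>TS. wealth (Vs 0) (ns 0) (Hs 0) j S = 0)"

text \<open>Initial endowment \<open>\<Sum>m V_m \<in> (-\<infinity>,+\<infinity>]\<close> (terms with m \<ge> 1 are nonnegative).\<close>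

definition endowment :: "(nat \<Rightarrow> real) \<Rightarrow> ereal" where
  "endowment Vs = ereal (Vs 0) + (\<Sum>m. ereal (Vs (Suc m)))"

definition superhedges ::
  "(nat \<Rightarrow> real) set \<Rightarrow> ((nat \<Rightarrow> real) \<Rightarrow> ereal) \<Rightarrow>
   (nat \<Rightarrow> real) \<Rightarrow> (nat \<Rightarrow> nat) \<Rightarrow> (nat \<Rightarrow> nat \<Rightarrow> real list \<Rightarrow> real) \<Rightarrow> bool" where
  "superhedges TS f Vs ns Hs \<longleftrightarrow>
     (\<forall>S\<in>TS. f S \<le> ereal (wealth_inf (Vs 0) (ns 0) (Hs 0) S)
                   + (\<Sum>m. ereal (wealth_inf (Vs (Suc m)) (ns (Suc m)) (Hs (Suc m)) S)))"

definition upper_I :: "(nat \<Rightarrow> real) set \<Rightarrow> ((nat \<Rightarrow> real) \<Rightarrow> ereal) \<Rightarrow> ereal" where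
  "upper_I TS f = Inf {endowment Vs | Vs ns Hs.
      pos_gen_portfolio TS Vs ns Hs \<and> superhedges TS f Vs ns Hs}"

definition upper_sigma :: "(nat \<Rightarrow> real) set \<Rightarrow> ((nat \<Rightarrow> real) \<Rightarrow> ereal) \<Rightarrow> ereal" where
  "upper_sigma TS f = Inf {endowment Vs | Vs ns Hs.
      gen_portfolio TS Vs ns Hs \<and> superhedges TS f Vs ns Hs}"

definition snorm :: "(nat \<Rightarrow> real) set \<Rightarrow> ((nat \<Rightarrow> real) \<Rightarrow> real) \<Rightarrow> ereal" where
  "snorm TS f = upper_I TS (\<lambda>S. ereal \<bar>f S\<bar>)"

definition null_function :: "(nat \<Rightarrow> real) set \<Rightarrow> ((nat \<Rightarrow> real) \<Rightarrow> real) \<Rightarrow> bool" where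
  "null_function TS f \<longleftrightarrow> snorm TS f = 0"

definition F_space :: "(nat \<Rightarrow> real) set \<Rightarrow> ((nat \<Rightarrow> real) \<Rightarrow> real) set" where
  "F_space TS = {f. snorm TS f < \<infinity>}"

definition E_space :: "(nat \<Rightarrow> real) set \<Rightarrow> ((nat \<Rightarrow> real) \<Rightarrow> real) set" where
  "E_space TS = {g. \<exists>V n H. 1 \<le> n \<and> (\<forall>S\<in>TS. g S = wealth_inf V n H S)}"

definition E'_space :: "(nat \<Rightarrow> real) set \<Rightarrow> ((nat \<Rightarrow> real) \<Rightarrow> real) set" where
  "E'_space TS = E_space TS \<inter> F_space TS"

definition elem_I :: "(nat \<Rightarrow> real) set \<Rightarrow> ((nat \<Rightarrow> real) \<Rightarrow> real) \<Rightarrow> real" where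
  "elem_I TS g = (THE V. \<exists>n H. 1 \<le> n \<and> (\<forall>S\<in>TS. g S = wealth_inf V n H S))"

definition L1_space :: "(nat \<Rightarrow> real) set \<Rightarrow> ((nat \<Rightarrow> real) \<Rightarrow> real) set" where
  "L1_space TS = {f \<in> F_space TS. \<forall>\<epsilon>>0. \<exists>g\<in>E'_space TS. snorm TS (\<lambda>S. f S - g S) < ereal \<epsilon>}"

definition L1_pos :: "(nat \<Rightarrow> real) set \<Rightarrow> ((nat \<Rightarrow> real) \<Rightarrow> real) set" where
  "L1_pos TS = {f \<in> L1_space TS. \<forall>S\<in>TS. 0 \<le> f S}"

text \<open>The hedging price integral: the value of the seminorm-continuous extension of
  elem_I from E' to L^1_(L), i.e. the limit of elem_I g as g \<rightarrow> f in E'.\<close>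

definition hedging_integral :: "(nat \<Rightarrow> real) set \<Rightarrow> ((nat \<Rightarrow> real) \<Rightarrow> real) \<Rightarrow> real" where
  "hedging_integral TS f = (THE c. \<forall>\<epsilon>>0. \<exists>\<delta>>0. \<forall>g\<in>E'_space TS.
      snorm TS (\<lambda>S. f S - g S) < ereal \<delta> \<longrightarrow> \<bar>elem_I TS g - c\<bar> < \<epsilon>)"

end

theory Submission
  imports Defs
begin

(* For an elementary g = Pi^{V,n,H}_inf, the price sigma(f) lies within ||f - g|| of V.
   From above: adding the simple portfolio (V,n,H) to a positive portfolio superhedging
   |f - g| superhedges f. From below: subtracting it from the sum of a portfolio superhedging f
   and one superhedging |f - g| superhedges f + |f - g| - g >= 0, so its price is nonnegative
   by sigma(0) >= 0; the same no-arbitrage argument shows that I(g) = V is well defined.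
   Since E' is dense in L^1_(L), the hedging integral of f is therefore sigma(f), and for
   f >= 0 with vanishing integral we get ||f|| = I(f) = sigma(f) = 0. *)

(* Each strategy is switched off after its own horizon, so the combination has horizon max n1 n2. *)
definition strategy_lincomb ::
  "real \<Rightarrow> nat \<Rightarrow> (nat \<Rightarrow> real list \<Rightarrow> real) \<Rightarrow> real \<Rightarrow> nat \<Rightarrow> (nat \<Rightarrow> real list \<Rightarrow> real) \<Rightarrow>
   nat \<Rightarrow> real list \<Rightarrow> real" where
  "strategy_lincomb a n1 H1 b n2 H2 i x =
     a * (if i < n1 then H1 i x else 0) + b * (if i < n2 then H2 i x else 0)"

lemma sum_lessThan_min_max_truncate:
  "(\<Sum>i<min j (max n1 n2). if i < n1 then h i else 0) = (\<Sum>i<min j (n1::nat). h i :: real)"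
  by (rule sum.mono_neutral_cong_right) auto

lemma wealth_strategy_lincomb:
  "wealth (a * V1 + b * V2) (max n1 n2) (strategy_lincomb a n1 H1 b n2 H2) j S =
     a * wealth V1 n1 H1 j S + b * wealth V2 n2 H2 j S"
proof -
  let ?t = "\<lambda>n H i. if i < n then H i (prefix S i) * (S (Suc i) - S i) else 0"
  have "(\<Sum>i<min j (max n1 n2). strategy_lincomb a n1 H1 b n2 H2 i (prefix S i) * (S (Suc i) - S i))
      = (\<Sum>i<min j (max n1 n2). a * ?t n1 H1 i + b * ?t n2 H2 i)"
    by (rule sum.cong) (auto simp: strategy_lincomb_def algebra_simps)
  also have "\<dots> = a * (\<Sum>i<min j (max n1 n2). ?t n1 H1 i) + b * (\<Sum>i<min j (max n2 n1). ?t n2 H2 i)"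
    by (simp add: sum.distrib sum_distrib_left max.commute)
  finally show ?thesis
    unfolding wealth_def sum_lessThan_min_max_truncate by (simp add: algebra_simps)
qed

lemma wealth_eq_wealth_inf: "n \<le> j \<Longrightarrow> wealth V n H j S = wealth_inf V n H S"
  by (simp add: wealth_def wealth_inf_def min_def)

lemma wealth_inf_strategy_lincomb:
  "wealth_inf (a * V1 + b * V2) (max n1 n2) (strategy_lincomb a n1 H1 b n2 H2) S =
     a * wealth_inf V1 n1 H1 S + b * wealth_inf V2 n2 H2 S"
  by (simp add: wealth_inf_def[of _ "max n1 n2"] wealth_strategy_lincomb wealth_eq_wealth_inf)

lemma positive_portfolio_add:
  assumes "positive_portfolio TS V1 n1 H1" "positive_portfolio TS V2 n2 H2"
  shows "positive_portfolio TS (V1 + V2) (max n1 n2) (strategy_lincomb 1 n1 H1 1 n2 H2)"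
  using assms wealth_inf_strategy_lincomb[of 1 V1 1 V2] by (auto simp: positive_portfolio_def)

definition gen_wealth ::
  "(nat \<Rightarrow> real) \<Rightarrow> (nat \<Rightarrow> nat) \<Rightarrow> (nat \<Rightarrow> nat \<Rightarrow> real list \<Rightarrow> real) \<Rightarrow> (nat \<Rightarrow> real) \<Rightarrow> ereal" where
  "gen_wealth Vs ns Hs S = ereal (wealth_inf (Vs 0) (ns 0) (Hs 0) S)
     + (\<Sum>m. ereal (wealth_inf (Vs (Suc m)) (ns (Suc m)) (Hs (Suc m)) S))"

lemma superhedges_iff_gen_wealth:
  "superhedges TS f Vs ns Hs \<longleftrightarrow> (\<forall>S\<in>TS. f S \<le> gen_wealth Vs ns Hs S)"
  by (simp add: superhedges_def gen_wealth_def)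

lemma gen_portfolio_nonneg:
  assumes "gen_portfolio TS Vs ns Hs"
  shows "0 \<le> Vs (Suc m)"
    and "S \<in> TS \<Longrightarrow> 0 \<le> wealth_inf (Vs (Suc m)) (ns (Suc m)) (Hs (Suc m)) S"
  using assms by (auto simp: gen_portfolio_def positive_portfolio_def)

lemma gen_portfolio_zero:
  "gen_portfolio TS (\<lambda>_. 0) (\<lambda>_. 1) (\<lambda>_ _ _. 0)"
  "endowment (\<lambda>_. 0) = 0"
  "gen_wealth (\<lambda>_. 0) (\<lambda>_. 1) (\<lambda>_ _ _. 0) S = 0"
  by (simp_all add: gen_portfolio_def positive_portfolio_def endowment_def gen_wealth_def
      wealth_inf_def wealth_def zero_ereal_def[symmetric])

lemma gen_portfolio_add:
  assumes P: "gen_portfolio TS VsP nsP HsP" and Q: "gen_portfolio TS VsQ nsQ HsQ"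
  obtains Vs ns Hs where "gen_portfolio TS Vs ns Hs"
    and "endowment Vs = endowment VsP + endowment VsQ"
    and "\<And>S. S \<in> TS \<Longrightarrow> gen_wealth Vs ns Hs S = gen_wealth VsP nsP HsP S + gen_wealth VsQ nsQ HsQ S"
proof
  define Vs where "Vs m = VsP m + VsQ m" for m
  define ns where "ns m = max (nsP m) (nsQ m)" for m
  define Hs where "Hs m = strategy_lincomb 1 (nsP m) (HsP m) 1 (nsQ m) (HsQ m)" for m
  have wealth: "wealth_inf (Vs m) (ns m) (Hs m) S
      = wealth_inf (VsP m) (nsP m) (HsP m) S + wealth_inf (VsQ m) (nsQ m) (HsQ m) S" for m S
    using wealth_inf_strategy_lincomb[of 1 "VsP m" 1 "VsQ m"] by (simp add: Vs_def ns_def Hs_def)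
  show "gen_portfolio TS Vs ns Hs"
    using P Q by (auto simp: gen_portfolio_def Vs_def ns_def Hs_def intro: positive_portfolio_add)
  show "endowment Vs = endowment VsP + endowment VsQ"
    using suminf_add_ereal[of "\<lambda>m. ereal (VsP (Suc m))" "\<lambda>m. ereal (VsQ (Suc m))"]
      gen_portfolio_nonneg(1)[OF P] gen_portfolio_nonneg(1)[OF Q]
    by (simp add: endowment_def Vs_def) (simp flip: plus_ereal.simps(1) add: ac_simps)
  show "gen_wealth Vs ns Hs S = gen_wealth VsP nsP HsP S + gen_wealth VsQ nsQ HsQ S" if "S \<in> TS" for S
    using suminf_add_ereal[of "\<lambda>m. ereal (wealth_inf (VsP (Suc m)) (nsP (Suc m)) (HsP (Suc m)) S)"
        "\<lambda>m. ereal (wealth_inf (VsQ (Suc m)) (nsQ (Suc m)) (HsQ (Suc m)) S)"]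
      gen_portfolio_nonneg(2)[OF P that] gen_portfolio_nonneg(2)[OF Q that]
    by (simp add: gen_wealth_def wealth) (simp flip: plus_ereal.simps(1) add: ac_simps)
qed

(* The simple portfolio is merged into the 0th component, the only one that need not be
   positive; this is why c may be negative. *)
lemma gen_portfolio_add_simple:
  assumes P: "gen_portfolio TS Vs ns Hs"
  obtains Vs' ns' Hs' where "gen_portfolio TS Vs' ns' Hs'"
    and "endowment Vs' = endowment Vs + ereal (c * V)"
    and "\<And>S. gen_wealth Vs' ns' Hs' S = gen_wealth Vs ns Hs S + ereal (c * wealth_inf V n H S)"
proof
  let ?Vs = "Vs(0 := Vs 0 + c * V)"
  let ?ns = "ns(0 := max (ns 0) n)"
  let ?Hs = "Hs(0 := strategy_lincomb 1 (ns 0) (Hs 0) c n H)"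
  show "gen_portfolio TS ?Vs ?ns ?Hs"
    using P by (auto simp: gen_portfolio_def)
  show "endowment ?Vs = endowment Vs + ereal (c * V)"
    by (simp add: endowment_def flip: plus_ereal.simps(1) add: ac_simps)
  show "gen_wealth ?Vs ?ns ?Hs S = gen_wealth Vs ns Hs S + ereal (c * wealth_inf V n H S)" for S
    using wealth_inf_strategy_lincomb[of 1 "Vs 0" c V "ns 0" n "Hs 0" H S]
    by (simp add: gen_wealth_def) (simp flip: plus_ereal.simps(1) add: ac_simps)
qed

lemma gen_portfolio_simple:
  obtains Vs ns Hs where "gen_portfolio TS Vs ns Hs" and "endowment Vs = ereal V"
    and "\<And>S. gen_wealth Vs ns Hs S = ereal (wealth_inf V n H S)"
proof -
  obtain Vs ns Hs where R: "gen_portfolio TS Vs ns Hs"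
    and "endowment Vs = endowment (\<lambda>_. 0) + ereal (1 * V)"
    and "\<And>S. gen_wealth Vs ns Hs S = gen_wealth (\<lambda>_. 0) (\<lambda>_. 1) (\<lambda>_ _ _. 0) S + ereal (1 * wealth_inf V n H S)"
    using gen_portfolio_add_simple[OF gen_portfolio_zero(1)[of TS], where c = 1 and V = V and n = n and H = H]
    by blast
  then have "endowment Vs = ereal V" and "\<And>S. gen_wealth Vs ns Hs S = ereal (wealth_inf V n H S)"
    unfolding gen_portfolio_zero by simp_all
  with R show ?thesis by (rule that)
qed

lemma upper_sigma_le_endowment:
  "gen_portfolio TS Vs ns Hs \<Longrightarrow> superhedges TS f Vs ns Hs \<Longrightarrow> upper_sigma TS f \<le> endowment Vs"
  unfolding upper_sigma_def by (rule Inf_lower) blast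

lemma endowment_nonneg_if_gen_wealth_nonneg:
  assumes "0 \<le> upper_sigma TS (\<lambda>S. 0)" and "gen_portfolio TS Vs ns Hs"
    and "\<And>S. S \<in> TS \<Longrightarrow> 0 \<le> gen_wealth Vs ns Hs S"
  shows "0 \<le> endowment Vs"
  using assms upper_sigma_le_endowment[of TS Vs ns Hs "\<lambda>S. 0"]
  by (simp add: superhedges_iff_gen_wealth)

lemma initial_value_mono:
  assumes no_arbitrage: "0 \<le> upper_sigma TS (\<lambda>S. 0)"
    and le: "\<And>S. S \<in> TS \<Longrightarrow> wealth_inf V' n' H' S \<le> wealth_inf V n H S"
  shows "V' \<le> V"
proof -
  let ?H = "strategy_lincomb 1 n H (-1) n' H'"
  obtain Vs ns Hs where R: "gen_portfolio TS Vs ns Hs" and endow: "endowment Vs = ereal (V - V')"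
    and wealth: "\<And>S. gen_wealth Vs ns Hs S = ereal (wealth_inf (V - V') (max n n') ?H S)"
    using gen_portfolio_simple by blast
  have "wealth_inf (V - V') (max n n') ?H S = wealth_inf V n H S - wealth_inf V' n' H' S" for S
    using wealth_inf_strategy_lincomb[of 1 V "-1" V' n n' H H' S] by simp
  then have "0 \<le> gen_wealth Vs ns Hs S" if "S \<in> TS" for S
    using le[OF that] by (simp add: wealth)
  then show ?thesis
    using endowment_nonneg_if_gen_wealth_nonneg[OF no_arbitrage R] by (simp add: endow)
qed

lemma elem_I_eq:
  assumes no_arbitrage: "0 \<le> upper_sigma TS (\<lambda>S. 0)"
    and "1 \<le> n" and g: "\<forall>S\<in>TS. g S = wealth_inf V n H S"
  shows "elem_I TS g = V"
  unfolding elem_I_def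
proof (rule the_equality)
  show "\<exists>n H. 1 \<le> n \<and> (\<forall>S\<in>TS. g S = wealth_inf V n H S)"
    using assms by blast
next
  fix V' assume "\<exists>n' H'. 1 \<le> n' \<and> (\<forall>S\<in>TS. g S = wealth_inf V' n' H' S)"
  then obtain n' H' where g': "\<forall>S\<in>TS. g S = wealth_inf V' n' H' S" by blast
  have "V' \<le> V"
    by (rule initial_value_mono[OF no_arbitrage, of V' n' H' V n H]) (use g g' in simp)
  moreover have "V \<le> V'"
    by (rule initial_value_mono[OF no_arbitrage, of V n H V' n' H']) (use g g' in simp)
  ultimately show "V' = V" by simp
qed

lemma ereal_le_Inf_add:
  fixes y c :: ereal
  assumes "\<And>a. a \<in> A \<Longrightarrow> y \<le> a + c"
  shows "y \<le> Inf A + c"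
proof (cases c)
  case (real r)
  have "y - c \<le> Inf A"
    using assms by (intro Inf_greatest) (simp add: ereal_minus_le real)
  then show ?thesis by (simp add: ereal_minus_le real)
next
  case MInf
  show ?thesis
  proof (cases "Inf A = \<infinity>")
    case False
    then have "Inf A < \<infinity>" by (cases "Inf A") auto
    then obtain a where "a \<in> A" "a < \<infinity>" by (meson Inf_less_iff)
    then show ?thesis using assms[of a] MInf by (cases a) auto
  qed (simp add: MInf)
qed simp

lemma upper_sigma_le_endowment_add:
  assumes Q: "gen_portfolio TS Vs ns Hs" and hedge: "superhedges TS (\<lambda>S. ereal \<bar>f S - g S\<bar>) Vs ns Hs"
    and g: "\<forall>S\<in>TS. g S = wealth_inf V n H S"
  shows "upper_sigma TS (\<lambda>S. ereal (f S)) \<le> endowment Vs + ereal V"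
proof -
  obtain Vs' ns' Hs' where R: "gen_portfolio TS Vs' ns' Hs'"
    and endow: "endowment Vs' = endowment Vs + ereal (1 * V)"
    and wealth: "\<And>S. gen_wealth Vs' ns' Hs' S = gen_wealth Vs ns Hs S + ereal (1 * wealth_inf V n H S)"
    using gen_portfolio_add_simple[OF Q, where c = 1 and V = V and n = n and H = H] by blast
  have "ereal (f S) \<le> gen_wealth Vs' ns' Hs' S" if S: "S \<in> TS" for S
  proof -
    have "ereal (f S) \<le> ereal \<bar>f S - g S\<bar> + ereal (g S)" by simp
    also have "\<dots> \<le> gen_wealth Vs ns Hs S + ereal (g S)"
      using hedge S by (intro add_right_mono) (simp add: superhedges_iff_gen_wealth)
    finally show ?thesis using g S by (simp add: wealth)
  qed
  then have "upper_sigma TS (\<lambda>S. ereal (f S)) \<le> endowment Vs'"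
    using R by (intro upper_sigma_le_endowment) (auto simp: superhedges_iff_gen_wealth)
  then show ?thesis by (simp add: endow)
qed

lemma le_endowment_add_endowment:
  assumes no_arbitrage: "0 \<le> upper_sigma TS (\<lambda>S. 0)"
    and P: "gen_portfolio TS VsP nsP HsP" and hedgeP: "superhedges TS (\<lambda>S. ereal (f S)) VsP nsP HsP"
    and Q: "gen_portfolio TS VsQ nsQ HsQ" and hedgeQ: "superhedges TS (\<lambda>S. ereal \<bar>f S - g S\<bar>) VsQ nsQ HsQ"
    and g: "\<forall>S\<in>TS. g S = wealth_inf V n H S"
  shows "ereal V \<le> endowment VsP + endowment VsQ"
proof -
  obtain VsPQ nsPQ HsPQ where PQ: "gen_portfolio TS VsPQ nsPQ HsPQ"
    and endowPQ: "endowment VsPQ = endowment VsP + endowment VsQ"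
    and wealthPQ: "\<And>S. S \<in> TS \<Longrightarrow> gen_wealth VsPQ nsPQ HsPQ S = gen_wealth VsP nsP HsP S + gen_wealth VsQ nsQ HsQ S"
    using gen_portfolio_add[OF P Q] by blast
  obtain Vs ns Hs where R: "gen_portfolio TS Vs ns Hs"
    and endow: "endowment Vs = endowment VsPQ + ereal (- 1 * V)"
    and wealth: "\<And>S. gen_wealth Vs ns Hs S = gen_wealth VsPQ nsPQ HsPQ S + ereal (- 1 * wealth_inf V n H S)"
    using gen_portfolio_add_simple[OF PQ, where c = "- 1" and V = V and n = n and H = H] by blast
  have "0 \<le> gen_wealth Vs ns Hs S" if S: "S \<in> TS" for S
  proof -
    have "0 \<le> ereal (f S) + ereal \<bar>f S - g S\<bar> + ereal (- g S)" by simp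
    also have "\<dots> \<le> gen_wealth VsP nsP HsP S + gen_wealth VsQ nsQ HsQ S + ereal (- g S)"
      using hedgeP hedgeQ S by (intro add_mono) (simp_all add: superhedges_iff_gen_wealth)
    finally show ?thesis using g S by (simp add: wealth wealthPQ)
  qed
  then have "0 \<le> endowment VsP + endowment VsQ + ereal (- V)"
    using endowment_nonneg_if_gen_wealth_nonneg[OF no_arbitrage R] by (simp add: endow endowPQ)
  then show ?thesis by (cases "endowment VsP + endowment VsQ") auto
qed

lemma upper_sigma_le_snorm_add:
  assumes g: "\<forall>S\<in>TS. g S = wealth_inf V n H S"
  shows "upper_sigma TS (\<lambda>S. ereal (f S)) \<le> snorm TS (\<lambda>S. f S - g S) + ereal V"
  unfolding snorm_def upper_I_def
  by (rule ereal_le_Inf_add)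
    (auto simp: pos_gen_portfolio_def intro: upper_sigma_le_endowment_add[OF _ _ g])

lemma le_upper_sigma_add_snorm:
  assumes no_arbitrage: "0 \<le> upper_sigma TS (\<lambda>S. 0)" and g: "\<forall>S\<in>TS. g S = wealth_inf V n H S"
  shows "ereal V \<le> upper_sigma TS (\<lambda>S. ereal (f S)) + snorm TS (\<lambda>S. f S - g S)"
  unfolding snorm_def upper_I_def upper_sigma_def
  by (intro ereal_le_Inf_add, subst add.commute, intro ereal_le_Inf_add)
    (auto simp: pos_gen_portfolio_def add.commute intro: le_endowment_add_endowment[OF no_arbitrage _ _ _ _ g])

lemma the_approximation_limit_eq:
  fixes N :: "'a \<Rightarrow> ereal" and \<phi> :: "'a \<Rightarrow> real"
  assumes approx: "\<And>\<epsilon>. 0 < \<epsilon> \<Longrightarrow> \<exists>g\<in>G. N g < ereal \<epsilon>"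
    and bound: "\<And>g. g \<in> G \<Longrightarrow> ereal \<bar>\<phi> g - c\<bar> \<le> N g"
  shows "(THE c. \<forall>\<epsilon>>0. \<exists>\<delta>>0. \<forall>g\<in>G. N g < ereal \<delta> \<longrightarrow> \<bar>\<phi> g - c\<bar> < \<epsilon>) = c"
proof (rule the_equality)
  have close: "\<bar>\<phi> g - c\<bar> < \<epsilon>" if "g \<in> G" "N g < ereal \<epsilon>" for g \<epsilon>
    using order_le_less_trans[OF bound[OF that(1)] that(2)] by simp
  then show "\<forall>\<epsilon>>0. \<exists>\<delta>>0. \<forall>g\<in>G. N g < ereal \<delta> \<longrightarrow> \<bar>\<phi> g - c\<bar> < \<epsilon>"
    by blast
  fix c' assume c': "\<forall>\<epsilon>>0. \<exists>\<delta>>0. \<forall>g\<in>G. N g < ereal \<delta> \<longrightarrow> \<bar>\<phi> g - c'\<bar> < \<epsilon>"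
  show "c' = c"
  proof (rule ccontr)
    assume "c' \<noteq> c"
    then have \<epsilon>: "0 < \<bar>c' - c\<bar> / 2" by simp
    then obtain \<delta> where "0 < \<delta>" and close': "\<forall>g\<in>G. N g < ereal \<delta> \<longrightarrow> \<bar>\<phi> g - c'\<bar> < \<bar>c' - c\<bar> / 2"
      using c' by blast
    then obtain g where g: "g \<in> G" and "N g < ereal (min \<delta> (\<bar>c' - c\<bar> / 2))"
      using approx[of "min \<delta> (\<bar>c' - c\<bar> / 2)"] \<epsilon> by auto
    then have "N g < ereal \<delta>" and "N g < ereal (\<bar>c' - c\<bar> / 2)"
      by (simp_all add: order_less_le_trans)
    then have "\<bar>\<phi> g - c'\<bar> < \<bar>c' - c\<bar> / 2" and "\<bar>\<phi> g - c\<bar> < \<bar>c' - c\<bar> / 2"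
      using close' close g by blast+
    then show False
      using abs_triangle_ineq4[of "\<phi> g - c" "\<phi> g - c'"] by simp
  qed
qed

lemma hedging_integral_eq_upper_sigma:
  assumes no_arbitrage: "0 \<le> upper_sigma TS (\<lambda>S. 0)" and f: "f \<in> L1_space TS"
  shows "upper_sigma TS (\<lambda>S. ereal (f S)) = ereal (hedging_integral TS f)"
proof -
  let ?\<sigma> = "upper_sigma TS (\<lambda>S. ereal (f S))"
  have approx: "\<exists>g\<in>E'_space TS. snorm TS (\<lambda>S. f S - g S) < ereal \<epsilon>" if "0 < \<epsilon>" for \<epsilon>
    using f that unfolding L1_space_def by blast
  have bounds: "?\<sigma> \<le> snorm TS (\<lambda>S. f S - g S) + ereal (elem_I TS g)"
    "ereal (elem_I TS g) \<le> ?\<sigma> + snorm TS (\<lambda>S. f S - g S)" if gE: "g \<in> E'_space TS" for g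
  proof -
    obtain V n H where n: "1 \<le> n" and g: "\<forall>S\<in>TS. g S = wealth_inf V n H S"
      using gE unfolding E'_space_def E_space_def by blast
    moreover have "elem_I TS g = V"
      using elem_I_eq[OF no_arbitrage n g] .
    ultimately show "?\<sigma> \<le> snorm TS (\<lambda>S. f S - g S) + ereal (elem_I TS g)"
      "ereal (elem_I TS g) \<le> ?\<sigma> + snorm TS (\<lambda>S. f S - g S)"
      using upper_sigma_le_snorm_add[OF g] le_upper_sigma_add_snorm[OF no_arbitrage g] by simp_all
  qed
  obtain g1 where "g1 \<in> E'_space TS" and "snorm TS (\<lambda>S. f S - g1 S) < ereal 1"
    using approx[of 1] by auto
  then obtain c where c: "?\<sigma> = ereal c"
    using bounds[of g1] by (cases ?\<sigma>; cases "snorm TS (\<lambda>S. f S - g1 S)") auto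
  have "hedging_integral TS f = c"
    unfolding hedging_integral_def
  proof (rule the_approximation_limit_eq)
    show "\<exists>g\<in>E'_space TS. snorm TS (\<lambda>S. f S - g S) < ereal \<epsilon>" if "0 < \<epsilon>" for \<epsilon>
      using approx that .
    show "ereal \<bar>elem_I TS g - c\<bar> \<le> snorm TS (\<lambda>S. f S - g S)" if "g \<in> E'_space TS" for g
      using bounds[OF that] c by (cases "snorm TS (\<lambda>S. f S - g S)") auto
  qed
  with c show ?thesis by simp
qed

lemma upper_I_cong:
  "(\<And>S. S \<in> TS \<Longrightarrow> F S = G S) \<Longrightarrow> upper_I TS F = upper_I TS G"
  unfolding upper_I_def superhedges_def by simp

theorem proposition3p9:
  fixes s0 :: real and TS :: "(nat \<Rightarrow> real) set"
  assumes "trajectory_set s0 TS"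
    and "upper_sigma TS (\<lambda>S. 0) \<ge> 0"
    and "\<forall>f\<in>L1_pos TS. upper_I TS (\<lambda>S. ereal (f S)) = upper_sigma TS (\<lambda>S. ereal (f S))"
  shows "\<forall>f\<in>L1_pos TS. hedging_integral TS f = 0 \<longrightarrow> null_function TS f"
proof (intro ballI impI)
  \<comment> \<open>The initial value s0 of the trajectories plays no role in the argument.\<close>
  fix f assume f: "f \<in> L1_pos TS" and "hedging_integral TS f = 0"
  then have "upper_sigma TS (\<lambda>S. ereal (f S)) = 0"
    using hedging_integral_eq_upper_sigma[OF assms(2)] by (simp add: L1_pos_def)
  then have "upper_I TS (\<lambda>S. ereal (f S)) = 0"
    using assms(3) f by simp
  moreover have "snorm TS f = upper_I TS (\<lambda>S. ereal (f S))"
    using f unfolding snorm_def L1_pos_def by (intro upper_I_cong) auto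
  ultimately show "null_function TS f"
    by (simp add: null_function_def)
qed

end
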